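(* Let $t\ge 2$ be an integer and let $G$ be a graph with $n$ vertices. Then \[ \mu_{t}(G)\leq \frac{t}{n}\binom{n}{t}^{\frac{1}{t}}\left(c_{t}(G)\right)^{\frac{t-1}{t}}, \] where $c_t(G)$ is the number of $t$-cliques of $G$ and $\mu_t(G)$ is the $t$-clique spectral radius of $G$. Furthermore, equality holds if $G$ is a complete graph or a $K_t$-free graph.
   Context: All graphs are simple and undirected. A $t$-clique of a graph $G$ is a set of $t$ vertices inducing a complete subgraph; $C_t(G)$ denotes the set of $t$-cliques and $c_t(G)=|C_t(G)|$. For a graph $G$ with vertex set $\{1,\dots,n\}$, the $t$-clique tensor $\mathcal{A}(G)=(a_{i_1\cdots i_t})$ is the order $t$, dimension $n$ tensor with $a_{i_1 i_2\cdots i_t}=\frac{1}{(t-1)!}$ if $\{i_1,\dots,i_t\}\in C_t(G)$ (in particular the $i_j$ are distinct) and $a_{i_1\cdots i_t}=0$ otherwise. For an order $m$ dimension $n$ tensor $\mathcal{A}$ and $x\in\mathbb{C}^n$, $\mathcal{A}x^{m-1}$ is the vector whose $i$-th component is $\sum_{i_2,\dots,i_m=1}^n a_{i i_2\cdots i_m}x_{i_2}\cdots x_{i_m}$; $\lambda\in\mathbb{C}$ is an eigenvalue of $\mathcal{A}$ if there is a nonzero $x\in\mathbb{C}^n$ with $\mathcal{A}x^{m-1}=\lambda x^{[m-1]}$, where $x^{[m-1]}=(x_1^{m-1},\dots,x_n^{m-1})^T$. The $t$-clique spectral radius $\mu_t(G)$ is the largest modulus of an eigenvalue of the $t$-clique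 tensor of $G$. *)

theory Defs
  imports Complex_Main
begin

text \<open>Graphs: vertex set {0..<n} (the paper's {1..n} shifted), edge relation E
 (assumed symmetric and irreflexive in the theorem).\<close>

definition is_clique :: "(nat \<Rightarrow> nat \<Rightarrow> bool) \<Rightarrow> nat set \<Rightarrow> bool" where
  "is_clique E S \<longleftrightarrow> (\<forall>u\<in>S. \<forall>v\<in>S. u \<noteq> v \<longrightarrow> E u v)"

definition cliques :: "nat \<Rightarrow> (nat \<Rightarrow> nat \<Rightarrow> bool) \<Rightarrow> nat \<Rightarrow> nat set set" where
  "cliques n E t = {S. S \<subseteq> {..<n} \<and> card S = t \<and> is_clique E S}"

definition clique_count :: "nat \<Rightarrow> (nat \<Rightarrow> nat \<Rightarrow> bool) \<Rightarrow> nat \<Rightarrow> nat" where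
  "clique_count n E t = card (cliques n E t)"

text \<open>Tensors of order m, dimension n: functions from index lists (of length m,
 entries < n) to complex numbers.\<close>

definition clique_tensor :: "nat \<Rightarrow> (nat \<Rightarrow> nat \<Rightarrow> bool) \<Rightarrow> nat \<Rightarrow> nat list \<Rightarrow> complex" where
  "clique_tensor n E t is =
     (if length is = t \<and> distinct is \<and> set is \<in> cliques n E t
      then 1 / of_nat (fact (t - 1)) else 0)"

definition tensor_apply :: "nat \<Rightarrow> nat \<Rightarrow> (nat list \<Rightarrow> complex) \<Rightarrow> (nat \<Rightarrow> complex) \<Rightarrow> nat \<Rightarrow> complex" where
  "tensor_apply m n A x i =
     (\<Sum>is \<in> {is. length is = m - 1 \<and> set is \<subseteq> {..<n}}. A (i # is) * prod_list (map x is))"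

definition tensor_eigenvalue :: "nat \<Rightarrow> nat \<Rightarrow> (nat list \<Rightarrow> complex) \<Rightarrow> complex \<Rightarrow> bool" where
  "tensor_eigenvalue m n A lam \<longleftrightarrow>
     (\<exists>x :: nat \<Rightarrow> complex. (\<exists>i<n. x i \<noteq> 0) \<and>
        (\<forall>i<n. tensor_apply m n A x i = lam * x i ^ (m - 1)))"

definition tensor_spectral_radius :: "nat \<Rightarrow> nat \<Rightarrow> (nat list \<Rightarrow> complex) \<Rightarrow> real" where
  "tensor_spectral_radius m n A = Sup {cmod lam | lam. tensor_eigenvalue m n A lam}"

definition clique_spectral_radius :: "nat \<Rightarrow> (nat \<Rightarrow> nat \<Rightarrow> bool) \<Rightarrow> nat \<Rightarrow> real" where
  "clique_spectral_radius n E t = tensor_spectral_radius t n (clique_tensor n E t)"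

end

theory Submission
  imports Defs "HOL-Analysis.Convex" "Jordan_Normal_Form.Char_Poly"
    "HOL-Combinatorics.Multiset_Permutations"
begin

(* Let x be an eigenvector for lambda and y_i = |x_i|. Multiplying the i-th eigen-equation
   by y_i and summing gives |lambda| * sum_i y_i^t <= t * P, where P is the sum over all
   t-cliques S of prod_{i in S} y_i. By the power mean inequality P^t <= c_t^(t-1) times the
   sum over cliques of prod_{i in S} y_i^t; that sum is at most the elementary symmetric
   polynomial e_t(y_1^t, ..., y_n^t), which Maclaurin's inequality bounds by
   (n choose t) (sum_i y_i^t / n)^t. Taking t-th roots gives the bound.
   For a complete graph the all-ones vector is an eigenvector with eigenvalue
   (n-1 choose t-1), which is exactly the bound; for a K_t-free graph the tensor vanishes
   and both sides are 0. *)

lemma power_ge_tangent_line: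
  fixes x m :: real and k :: nat
  assumes "x \<ge> 0" "m \<ge> 0" "k \<ge> 1"
  shows "m ^ k + real k * m ^ (k - 1) * (x - m) \<le> x ^ k"
proof (cases "m = 0")
  case True
  then show ?thesis using assms by (cases "k = 1") (auto simp: zero_power)
next
  case False
  then have m: "m > 0" using assms by auto
  have "m ^ k = m * m ^ (k - 1)" using assms by (cases k) auto
  then have "m ^ k + real k * m ^ (k - 1) * (x - m) = m ^ k * (1 + real k * ((x - m) / m))"
    using m by (simp add: field_simps)
  also have "\<dots> \<le> m ^ k * (1 + (x - m) / m) ^ k"
    using m assms by (intro mult_left_mono Bernoulli_inequality) (simp_all add: field_simps)
  also have "\<dots> = x ^ k" using m by (simp add: field_simps power_divide)
  finally show ?thesis .
qed

lemma power_sum_le_card_power_sum_power: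
  fixes z :: "'a \<Rightarrow> real"
  assumes "finite A" "\<And>a. a \<in> A \<Longrightarrow> z a \<ge> 0" "k \<ge> 1"
  shows "(\<Sum>a\<in>A. z a) ^ k \<le> real (card A) ^ (k - 1) * (\<Sum>a\<in>A. z a ^ k)"
proof (cases "A = {}")
  case True
  then show ?thesis using assms by (simp add: zero_power)
next
  case False
  define c where "c = real (card A)"
  have c: "c > 0" using False assms unfolding c_def by (simp add: card_gt_0_iff)
  have "convex_on {0..} (\<lambda>x::real. x ^ k)"
    by (cases "even k") (auto intro: convex_power_odd convex_on_subset[OF convex_power_even])
  from convex_on_sum[OF assms(1) False this, of "\<lambda>_. 1 / c" z]
  have "(\<Sum>a\<in>A. (1 / c) *\<^sub>R z a) ^ k \<le> (\<Sum>a\<in>A. (1 / c) * z a ^ k)"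
    using c assms(2) by (simp add: c_def)
  then have "((\<Sum>a\<in>A. z a) / c) ^ k \<le> (\<Sum>a\<in>A. z a ^ k) / c"
    by (simp add: sum_divide_distrib[symmetric] sum_distrib_left[symmetric] divide_inverse
        mult.commute)
  then have "(\<Sum>a\<in>A. z a) ^ k / c ^ k \<le> (\<Sum>a\<in>A. z a ^ k) / c"
    by (simp add: power_divide)
  then have "(\<Sum>a\<in>A. z a) ^ k \<le> (\<Sum>a\<in>A. z a ^ k) / c * c ^ k"
    using c by (simp add: divide_le_eq)
  also have "\<dots> = c ^ (k - 1) * (\<Sum>a\<in>A. z a ^ k)"
    using c assms(3) by (cases k) simp_all
  finally show ?thesis unfolding c_def .
qed

subsection \<open>Maclaurin's inequality\<close>

definition esym :: "nat \<Rightarrow> nat \<Rightarrow> (nat \<Rightarrow> real) \<Rightarrow> real" where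
  "esym n k w = (\<Sum>S | S \<subseteq> {..<n} \<and> card S = k. \<Prod>i\<in>S. w i)"

lemma esym_0 [simp]: "esym n 0 w = 1"
proof -
  have "{S. S \<subseteq> {..<n} \<and> card S = 0} = {{}}" by (auto dest: finite_subset)
  then show ?thesis unfolding esym_def by simp
qed

lemma esym_0_Suc [simp]: "esym 0 (Suc k) w = 0"
  unfolding esym_def by simp

lemma subsets_lessThan_Suc:
  "{S. S \<subseteq> {..<Suc n} \<and> card S = Suc k} =
     {S. S \<subseteq> {..<n} \<and> card S = Suc k} \<union> insert n ` {S. S \<subseteq> {..<n} \<and> card S = k}"
proof (intro equalityI subsetI)
  fix S assume S: "S \<in> {S. S \<subseteq> {..<Suc n} \<and> card S = Suc k}"
  show "S \<in> {S. S \<subseteq> {..<n} \<and> card S = Suc k} \<union> insert n ` {S. S \<subseteq> {..<n} \<and> card S = k}"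
  proof (cases "n \<in> S")
    case True
    have "finite S" using S finite_subset by blast
    then have "S - {n} \<in> {S. S \<subseteq> {..<n} \<and> card S = k}" using S True by auto
    moreover have "S = insert n (S - {n})" using True by auto
    ultimately show ?thesis by blast
  next
    case False
    then show ?thesis using S by (auto simp: less_Suc_eq)
  qed
next
  fix S
  assume "S \<in> {S. S \<subseteq> {..<n} \<and> card S = Suc k} \<union> insert n ` {S. S \<subseteq> {..<n} \<and> card S = k}"
  then show "S \<in> {S. S \<subseteq> {..<Suc n} \<and> card S = Suc k}"
  proof
    assume "S \<in> insert n ` {S. S \<subseteq> {..<n} \<and> card S = k}"
    then obtain T where T: "T \<subseteq> {..<n}" "card T = k" "S = insert n T" by auto
    then have "finite T" "n \<notin> T" using finite_subset by auto
    then show ?thesis using T by auto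
  qed auto
qed

lemma esym_Suc_Suc: "esym (Suc n) (Suc k) w = esym n (Suc k) w + w n * esym n k w"
proof -
  let ?A = "{S. S \<subseteq> {..<n} \<and> card S = Suc k}"
  let ?B = "{S. S \<subseteq> {..<n} \<and> card S = k}"
  have fin: "finite ?A" "finite ?B" by (auto intro: finite_subset[of _ "Pow {..<n}"])
  have inj: "inj_on (insert n) ?B"
    by (rule inj_onI) (metis Diff_insert_absorb lessThan_iff less_irrefl subsetD mem_Collect_eq)
  have "esym (Suc n) (Suc k) w = (\<Sum>S\<in>?A. \<Prod>i\<in>S. w i) + (\<Sum>S\<in>insert n ` ?B. \<Prod>i\<in>S. w i)"
    unfolding esym_def subsets_lessThan_Suc by (rule sum.union_disjoint) (use fin in auto)
  also have "(\<Sum>S\<in>insert n ` ?B. \<Prod>i\<in>S. w i) = (\<Sum>T\<in>?B. \<Prod>i\<in>insert n T. w i)"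
    by (subst sum.reindex[OF inj]) simp
  also have "\<dots> = (\<Sum>T\<in>?B. w n * (\<Prod>i\<in>T. w i))"
  proof (rule sum.cong)
    fix T assume "T \<in> ?B"
    then have "finite T" "n \<notin> T" using finite_subset by auto
    then show "(\<Prod>i\<in>insert n T. w i) = w n * (\<Prod>i\<in>T. w i)" by simp
  qed simp
  finally show ?thesis unfolding esym_def by (simp add: sum_distrib_left)
qed

text \<open>Induction on \<open>n\<close>: the new variable \<open>w n\<close> enters through \<open>esym_Suc_Suc\<close>, and the
  resulting combination of \<open>m ^ Suc k\<close> and \<open>m ^ k\<close>, with \<open>m\<close> the old mean, is the tangent
  line of \<open>x ^ Suc k\<close> at \<open>m\<close> evaluated at the new mean.\<close>

lemma esym_le_binomial_mean_power:
  assumes "\<And>i. w i \<ge> 0"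
  shows "esym n k w \<le> real (n choose k) * ((\<Sum>i<n. w i) / real n) ^ k"
proof (induction n arbitrary: k)
  case 0
  then show ?case by (cases k) simp_all
next
  case (Suc n)
  show ?case
  proof (cases k)
    case 0
    then show ?thesis by simp
  next
    case (Suc k)
    define s where "s = (\<Sum>i<n. w i)"
    define m where "m = s / real n"
    define u where "u = w n"
    have "s \<ge> 0" "u \<ge> 0" unfolding s_def u_def using assms by (simp_all add: sum_nonneg)
    then have "m \<ge> 0" unfolding m_def by simp
    have s: "s = real n * m"
      unfolding m_def by (cases "n = 0") (simp_all add: s_def)
    have "esym (Suc n) (Suc k) w \<le> real (n choose Suc k) * m ^ Suc k + u * (real (n choose k) * m ^ k)"
      unfolding esym_Suc_Suc u_def[symmetric]
      using Suc.IH[of "Suc k"] Suc.IH[of k] \<open>u \<ge> 0\<close> unfolding m_def s_def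
      by (intro add_mono mult_left_mono) auto
    also have "\<dots> = real (Suc n choose Suc k)
        * (m ^ Suc k + real (Suc k) * m ^ k * ((s + u) / real (Suc n) - m))"
    proof -
      have q: "real (Suc n choose Suc k) * real (Suc k) = real (Suc n) * real (n choose k)"
        using Suc_times_binomial_eq[of n k] by (metis of_nat_mult)
      have r: "(s + u) / real (Suc n) - m = (u - m) / real (Suc n)"
        using s by (simp add: field_simps)
      have "real (Suc n choose Suc k) * (real (Suc k) * m ^ k * ((s + u) / real (Suc n) - m))
          = (real (Suc n choose Suc k) * real (Suc k)) * m ^ k * ((u - m) / real (Suc n))"
        unfolding r by (simp only: mult.assoc)
      also have "\<dots> = real (n choose k) * m ^ k * (u - m)"
        unfolding q by (simp add: field_simps)
      finally show ?thesis by (simp add: algebra_simps)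
    qed
    also have "\<dots> \<le> real (Suc n choose Suc k) * ((s + u) / real (Suc n)) ^ Suc k"
      using power_ge_tangent_line[of "(s + u) / real (Suc n)" m "Suc k"]
        \<open>s \<ge> 0\<close> \<open>u \<ge> 0\<close> \<open>m \<ge> 0\<close>
      by (intro mult_left_mono) auto
    also have "s + u = (\<Sum>i<Suc n. w i)" unfolding s_def u_def by simp
    finally show ?thesis using Suc by simp
  qed
qed

lemma sum_prod_subsets_le:
  fixes y :: "nat \<Rightarrow> real"
  assumes F: "F \<subseteq> {S. S \<subseteq> {..<n} \<and> card S = t}" and t: "t \<ge> 1"
    and y: "\<And>i. y i \<ge> 0"
  shows "(\<Sum>S\<in>F. \<Prod>i\<in>S. y i) \<le> real (n choose t) powr (1 / real t)
           * real (card F) powr ((real t - 1) / real t) * ((\<Sum>i<n. y i ^ t) / real n)"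
proof (cases "F = {}")
  case True
  then show ?thesis by simp
next
  case False
  have "finite F" using F by (rule finite_subset) (auto intro: finite_subset[of _ "Pow {..<n}"])
  define c where "c = real (card F)"
  define m where "m = (\<Sum>i<n. y i ^ t) / real n"
  define P where "P = (\<Sum>S\<in>F. \<Prod>i\<in>S. y i)"
  have c: "c > 0" using False \<open>finite F\<close> unfolding c_def by (simp add: card_gt_0_iff)
  have "m \<ge> 0" "P \<ge> 0" unfolding m_def P_def using y by (simp_all add: sum_nonneg prod_nonneg)
  have "P ^ t \<le> c ^ (t - 1) * (\<Sum>S\<in>F. (\<Prod>i\<in>S. y i) ^ t)"
    unfolding P_def c_def
    by (rule power_sum_le_card_power_sum_power[OF \<open>finite F\<close>]) (use t y in \<open>auto simp: prod_nonneg\<close>)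
  also have "(\<Sum>S\<in>F. (\<Prod>i\<in>S. y i) ^ t) \<le> esym n t (\<lambda>i. y i ^ t)"
    unfolding esym_def prod_power_distrib
    by (rule sum_mono2) (use F y in \<open>auto simp: prod_nonneg intro: finite_subset[of _ "Pow {..<n}"]\<close>)
  also have "\<dots> \<le> real (n choose t) * m ^ t"
    unfolding m_def by (rule esym_le_binomial_mean_power) (simp add: y)
  finally have "P ^ t \<le> c ^ (t - 1) * (real (n choose t) * m ^ t)"
    using c by (simp add: mult_left_mono)
  also have "real (n choose t) = (real (n choose t) powr (1 / real t)) ^ t"
  proof (cases "n < t")
    case True
    then show ?thesis using t by (simp add: binomial_eq_0)
  next
    case False
    then show ?thesis using t by (simp add: powr_realpow[symmetric] powr_powr)
  qed
  also have "c ^ (t - 1) = (c powr ((real t - 1) / real t)) ^ t"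
    using c t by (simp add: powr_realpow[symmetric] powr_powr of_nat_diff)
  also have "(c powr ((real t - 1) / real t)) ^ t * ((real (n choose t) powr (1 / real t)) ^ t * m ^ t)
      = (real (n choose t) powr (1 / real t) * c powr ((real t - 1) / real t) * m) ^ t"
    by (simp add: power_mult_distrib)
  finally have "P ^ t \<le> (real (n choose t) powr (1 / real t) * c powr ((real t - 1) / real t) * m) ^ t" .
  moreover have "real (n choose t) powr (1 / real t) * c powr ((real t - 1) / real t) * m \<ge> 0"
    using \<open>m \<ge> 0\<close> by simp
  ultimately show ?thesis
    unfolding P_def[symmetric] c_def[symmetric] m_def[symmetric]
    using power_mono_iff[of P _ t] \<open>P \<ge> 0\<close> t by simp
qed

subsection \<open>Eigenvalues of tensors\<close>

definition index_lists :: "nat \<Rightarrow> nat \<Rightarrow> nat list set" where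
  "index_lists k n = {is. length is = k \<and> set is \<subseteq> {..<n}}"

lemma finite_index_lists [simp]: "finite (index_lists k n)"
  unfolding index_lists_def using finite_lists_length_eq[of "{..<n}" k] by (simp add: conj_commute)

lemma tensor_apply_eq_sum_index_lists:
  "tensor_apply m n A x i = (\<Sum>is\<in>index_lists (m - 1) n. A (i # is) * prod_list (map x is))"
  unfolding tensor_apply_def index_lists_def ..

lemma sum_index_lists_Suc:
  "(\<Sum>L\<in>index_lists (Suc k) n. f L) = (\<Sum>i<n. \<Sum>is\<in>index_lists k n. f (i # is))"
proof -
  have "index_lists (Suc k) n = (\<lambda>(i, is). i # is) ` ({..<n} \<times> index_lists k n)"
    unfolding index_lists_def by (auto simp: length_Suc_conv image_def)
  moreover have "inj_on (\<lambda>(i, is). i # is) ({..<n} \<times> index_lists k n)"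
    by (rule inj_onI) auto
  ultimately show ?thesis
    by (simp add: sum.reindex sum.cartesian_product split_def)
qed

lemma tensor_eigenvalue_norm_le:
  assumes m: "m \<ge> 1" and eig: "\<forall>i<n. tensor_apply m n A x i = lam * x i ^ (m - 1)"
  shows "cmod lam * (\<Sum>i<n. cmod (x i) ^ m)
           \<le> (\<Sum>L\<in>index_lists m n. cmod (A L) * prod_list (map (\<lambda>i. cmod (x i)) L))"
proof -
  define y where "y i = cmod (x i)" for i
  have y_nonneg: "y i \<ge> 0" for i unfolding y_def by simp
  have norm_prod: "cmod (prod_list (map x is)) = prod_list (map y is)" for "is"
    unfolding y_def by (induction "is") (auto simp: norm_mult)
  have row: "cmod lam * y i ^ (m - 1)
      \<le> (\<Sum>is\<in>index_lists (m - 1) n. cmod (A (i # is)) * prod_list (map y is))" if "i < n" for i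
  proof -
    have "cmod lam * y i ^ (m - 1) = cmod (tensor_apply m n A x i)"
      using eig that unfolding y_def by (simp add: norm_mult norm_power)
    also have "\<dots> \<le> (\<Sum>is\<in>index_lists (m - 1) n. cmod (A (i # is) * prod_list (map x is)))"
      unfolding tensor_apply_eq_sum_index_lists by (rule norm_sum)
    finally show ?thesis by (simp add: norm_mult norm_prod)
  qed
  have "cmod lam * (\<Sum>i<n. y i ^ m) = (\<Sum>i<n. y i * (cmod lam * y i ^ (m - 1)))"
  proof (unfold sum_distrib_left, rule sum.cong)
    show "cmod lam * y i ^ m = y i * (cmod lam * y i ^ (m - 1))" for i
      using m by (cases m) auto
  qed simp
  also have "\<dots> \<le> (\<Sum>i<n. y i * (\<Sum>is\<in>index_lists (m - 1) n. cmod (A (i # is)) * prod_list (map y is)))"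
    using row by (intro sum_mono mult_left_mono) (auto simp: y_nonneg)
  also have "\<dots> = (\<Sum>L\<in>index_lists (Suc (m - 1)) n. cmod (A L) * prod_list (map y L))"
    unfolding sum_index_lists_Suc sum_distrib_left by (simp add: mult.left_commute)
  also have "Suc (m - 1) = m" using m by simp
  finally show ?thesis unfolding y_def .
qed

lemma sum_distinct_lists_by_set:
  fixes g :: "'a set \<Rightarrow> 'b::comm_semiring_1"
  assumes "finite F" "\<And>S. S \<in> F \<Longrightarrow> finite S"
  shows "(\<Sum>L\<in>{L. distinct L \<and> set L \<in> F}. g (set L)) = (\<Sum>S\<in>F. of_nat (fact (card S)) * g S)"
proof -
  have "{L. distinct L \<and> set L \<in> F} = (\<Union>S\<in>F. permutations_of_set S)"
    unfolding permutations_of_set_def by auto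
  then have "(\<Sum>L\<in>{L. distinct L \<and> set L \<in> F}. g (set L))
      = (\<Sum>S\<in>F. \<Sum>L\<in>permutations_of_set S. g (set L))"
    by (simp only:) (rule sum.UNION_disjoint[OF assms(1)], simp, auto simp: permutations_of_set_def)
  also have "\<dots> = (\<Sum>S\<in>F. of_nat (fact (card S)) * g S)"
  proof (rule sum.cong[OF refl])
    fix S assume "S \<in> F"
    have "(\<Sum>L\<in>permutations_of_set S. g (set L)) = (\<Sum>L\<in>permutations_of_set S. g S)"
      by (rule sum.cong) (auto simp: permutations_of_set_def)
    then show "(\<Sum>L\<in>permutations_of_set S. g (set L)) = of_nat (fact (card S)) * g S"
      using assms(2)[OF \<open>S \<in> F\<close>] by simp
  qed
  finally show ?thesis .
qed

lemma card_distinct_lists: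
  assumes "finite A"
  shows "card {xs. length xs = k \<and> distinct xs \<and> set xs \<subseteq> A} = (card A choose k) * fact k"
proof -
  let ?F = "{T. T \<subseteq> A \<and> card T = k}"
  have "finite ?F" using assms by (auto intro: finite_subset[of _ "Pow A"])
  have "{xs. length xs = k \<and> distinct xs \<and> set xs \<subseteq> A} = {L. distinct L \<and> set L \<in> ?F}"
    by (auto simp: distinct_card)
  then have "card {xs. length xs = k \<and> distinct xs \<and> set xs \<subseteq> A}
      = (\<Sum>L\<in>{L. distinct L \<and> set L \<in> ?F}. (\<lambda>_. 1 :: nat) (set L))"
    by simp
  also have "\<dots> = (\<Sum>S\<in>?F. fact (card S))"
    using sum_distinct_lists_by_set[OF \<open>finite ?F\<close>, of "\<lambda>_. 1 :: nat"] finite_subset[OF _ assms]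
    by simp
  also have "\<dots> = (\<Sum>S\<in>?F. fact k)" by simp
  finally show ?thesis using n_subsets[OF assms] by simp
qed

subsection \<open>The clique tensor\<close>

definition clique_radius_bound :: "nat \<Rightarrow> (nat \<Rightarrow> nat \<Rightarrow> bool) \<Rightarrow> nat \<Rightarrow> real" where
  "clique_radius_bound n E t = real t / real n * real (n choose t) powr (1 / real t)
     * real (clique_count n E t) powr ((real t - 1) / real t)"

lemma cliques_subset: "cliques n E t \<subseteq> {S. S \<subseteq> {..<n} \<and> card S = t}"
  unfolding cliques_def by blast

lemma finite_cliques [simp]: "finite (cliques n E t)"
  using cliques_subset by (rule finite_subset) (auto intro: finite_subset[of _ "Pow {..<n}"])

lemma norm_clique_tensor:
  "cmod (clique_tensor n E t L)
     = (if length L = t \<and> distinct L \<and> set L \<in> cliques n E t then 1 / fact (t - 1) else 0)"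
  unfolding clique_tensor_def by (simp add: norm_divide)

lemma sum_norm_clique_tensor:
  fixes y :: "nat \<Rightarrow> real"
  assumes t: "t \<ge> 1"
  shows "(\<Sum>L\<in>index_lists t n. cmod (clique_tensor n E t L) * prod_list (map y L))
           = real t * (\<Sum>S\<in>cliques n E t. \<Prod>i\<in>S. y i)"
proof -
  let ?D = "{L. distinct L \<and> set L \<in> cliques n E t}"
  have D: "?D \<subseteq> index_lists t n"
    unfolding index_lists_def cliques_def by (auto simp: distinct_card)
  have "(\<Sum>L\<in>index_lists t n. cmod (clique_tensor n E t L) * prod_list (map y L))
      = (\<Sum>L\<in>?D. (\<lambda>S. (\<Prod>i\<in>S. y i) / fact (t - 1)) (set L))"
    by (rule sum.mono_neutral_cong_right[OF finite_index_lists D])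
      (auto simp: norm_clique_tensor prod.distinct_set_conv_list cliques_def distinct_card)
  also have "\<dots> = (\<Sum>S\<in>cliques n E t. of_nat (fact (card S)) * ((\<Prod>i\<in>S. y i) / fact (t - 1)))"
    by (rule sum_distinct_lists_by_set) (auto simp: cliques_def intro: finite_subset)
  also have "\<dots> = (\<Sum>S\<in>cliques n E t. real t * (\<Prod>i\<in>S. y i))"
  proof (rule sum.cong[OF refl])
    fix S assume "S \<in> cliques n E t"
    then have "card S = t" unfolding cliques_def by simp
    moreover have "fact t = real t * fact (t - 1)" using t by (cases t) auto
    ultimately show "of_nat (fact (card S)) * ((\<Prod>i\<in>S. y i) / fact (t - 1)) = real t * (\<Prod>i\<in>S. y i)"
      by simp
  qed
  finally show ?thesis by (simp add: sum_distrib_left)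
qed

lemma clique_tensor_eigenvalue_norm_le:
  assumes t: "t \<ge> 2" and eig: "tensor_eigenvalue t n (clique_tensor n E t) lam"
  shows "cmod lam \<le> clique_radius_bound n E t"
proof -
  obtain x where x: "\<exists>i<n. x i \<noteq> 0"
    and eq: "\<forall>i<n. tensor_apply t n (clique_tensor n E t) x i = lam * x i ^ (t - 1)"
    using eig unfolding tensor_eigenvalue_def by blast
  define y where "y i = cmod (x i)" for i
  define s where "s = (\<Sum>i<n. y i ^ t)"
  have "s > 0"
  proof -
    obtain i where "i < n" "x i \<noteq> 0" using x by blast
    then have "0 < y i ^ t" unfolding y_def by simp
    also have "y i ^ t \<le> s"
      unfolding s_def y_def by (rule member_le_sum) (use \<open>i < n\<close> in auto)
    finally show ?thesis .
  qed
  have "cmod lam * s \<le> real t * (\<Sum>S\<in>cliques n E t. \<Prod>i\<in>S. y i)"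
    using tensor_eigenvalue_norm_le[OF _ eq] sum_norm_clique_tensor[of t n E y] t
    unfolding s_def y_def by simp
  also have "\<dots> \<le> real t * (real (n choose t) powr (1 / real t)
      * real (clique_count n E t) powr ((real t - 1) / real t) * (s / real n))"
    unfolding s_def clique_count_def
    by (intro mult_left_mono sum_prod_subsets_le[OF cliques_subset]) (use t in \<open>auto simp: y_def\<close>)
  also have "\<dots> = clique_radius_bound n E t * s"
    unfolding clique_radius_bound_def by simp
  finally show ?thesis using \<open>s > 0\<close> by simp
qed

lemma order_2_tensor_has_eigenvalue:
  assumes n: "n \<ge> 1"
  shows "\<exists>lam. tensor_eigenvalue 2 n A lam"
proof -
  define M :: "complex mat" where "M = mat n n (\<lambda>(i, j). A [i, j])"
  have M: "M \<in> carrier_mat n n" unfolding M_def by simp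
  have "degree (char_poly M) = n" using degree_monic_char_poly[OF M] by simp
  then have "\<not> constant (poly (char_poly M))" using n by (simp add: constant_degree)
  then obtain k where "poly (char_poly M) k = 0" using fundamental_theorem_of_algebra by blast
  then have "eigenvalue M k" using eigenvalue_root_char_poly[OF M] by simp
  then obtain v where v: "v \<in> carrier_vec n" "v \<noteq> 0\<^sub>v n" "M *\<^sub>v v = k \<cdot>\<^sub>v v"
    unfolding eigenvalue_def eigenvector_def using M by auto
  have "\<exists>i<n. v $ i \<noteq> 0"
  proof (rule ccontr)
    assume "\<not> (\<exists>i<n. v $ i \<noteq> 0)"
    then have "v = 0\<^sub>v n" using v(1) by (intro eq_vecI) auto
    then show False using v(2) by simp
  qed
  moreover have "tensor_apply 2 n A (\<lambda>i. v $ i) i = k * v $ i ^ (2 - 1)" if i: "i < n" for i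
  proof -
    have "index_lists (Suc 0) n = (\<lambda>j. [j]) ` {..<n}"
      unfolding index_lists_def by (auto simp: length_Suc_conv image_def)
    then have "tensor_apply 2 n A (\<lambda>i. v $ i) i = (\<Sum>j<n. A [i, j] * v $ j)"
      unfolding tensor_apply_eq_sum_index_lists by (simp add: sum.reindex inj_on_def)
    also have "\<dots> = (M *\<^sub>v v) $ i"
      using M v(1) i unfolding M_def
      by (auto simp: scalar_prod_def lessThan_atLeast0 intro: sum.cong)
    also have "\<dots> = k * v $ i" using v(1,3) i by simp
    finally show ?thesis by simp
  qed
  ultimately show ?thesis unfolding tensor_eigenvalue_def by blast
qed

text \<open>The eigenvector is the first unit vector: a nonzero term of \<open>tensor_apply m n A x i\<close>
  needs \<open>m - 1 \<ge> 2\<close> indices all equal to \<open>0\<close>, so the index list is not distinct.\<close>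

lemma tensor_eigenvalue_0_if_vanishes_off_distinct:
  assumes m: "m \<ge> 3" and n: "n \<ge> 1" and A: "\<And>L. \<not> distinct L \<Longrightarrow> A L = 0"
  shows "tensor_eigenvalue m n A 0"
proof -
  define x :: "nat \<Rightarrow> complex" where "x i = (if i = 0 then 1 else 0)" for i
  have terms_vanish: "A (i # is) * prod_list (map x is) = 0"
    if "is": "is \<in> index_lists (m - 1) n" for i "is"
  proof (cases "set is \<subseteq> {0}")
    case True
    have "\<not> distinct is"
    proof
      assume "distinct is"
      then have "length is \<le> 1" using card_mono[OF _ True] by (simp add: distinct_card[symmetric])
      then show False using "is" m unfolding index_lists_def by simp
    qed
    then show ?thesis using A by simp
  next
    case False
    then have "0 \<in> set (map x is)" unfolding x_def by force
    then show ?thesis by (simp add: prod_list_zero_iff)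
  qed
  have "tensor_apply m n A x i = 0 * x i ^ (m - 1)" for i
    unfolding tensor_apply_eq_sum_index_lists mult_zero_left
    by (rule sum.neutral) (use terms_vanish in blast)
  moreover have "\<exists>i<n. x i \<noteq> 0" using n unfolding x_def by (intro exI[of _ 0]) auto
  ultimately show ?thesis unfolding tensor_eigenvalue_def by auto
qed

text \<open>Without an eigenvalue the spectral radius would be \<open>Sup {}\<close>, an unspecified real.\<close>

lemma clique_tensor_has_eigenvalue:
  assumes "t \<ge> 2" "n \<ge> 1"
  shows "\<exists>lam. tensor_eigenvalue t n (clique_tensor n E t) lam"
proof (cases "t = 2")
  case True
  then show ?thesis using order_2_tensor_has_eigenvalue[OF assms(2)] by simp
next
  case False
  then have "tensor_eigenvalue t n (clique_tensor n E t) 0"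
    using assms by (intro tensor_eigenvalue_0_if_vanishes_off_distinct) (auto simp: clique_tensor_def)
  then show ?thesis ..
qed

lemma complete_graph_cliques:
  assumes "\<forall>u<n. \<forall>v<n. u \<noteq> v \<longrightarrow> E u v"
  shows "cliques n E t = {S. S \<subseteq> {..<n} \<and> card S = t}"
  unfolding cliques_def is_clique_def using assms by blast

lemma complete_graph_clique_tensor_eigenvalue:
  assumes t: "t \<ge> 1" and nt: "n \<ge> t" and complete: "\<forall>u<n. \<forall>v<n. u \<noteq> v \<longrightarrow> E u v"
  shows "tensor_eigenvalue t n (clique_tensor n E t) (of_nat ((n - 1) choose (t - 1)))"
proof -
  define c :: complex where "c = 1 / of_nat (fact (t - 1))"
  define D where "D i = {xs. length xs = t - 1 \<and> distinct xs \<and> set xs \<subseteq> {..<n} - {i}}" for i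
  have entry: "clique_tensor n E t (i # is) = (if is \<in> D i then c else 0)"
    if i: "i < n" and "is": "is \<in> index_lists (t - 1) n" for i "is"
  proof -
    have len: "length is = t - 1" "set is \<subseteq> {..<n}" using "is" unfolding index_lists_def by auto
    then have "distinct (i # is) \<longleftrightarrow> is \<in> D i" unfolding D_def by auto
    moreover have "set (i # is) \<in> cliques n E t" if "distinct (i # is)"
      using distinct_card[OF that] len t i by (auto simp: complete_graph_cliques[OF complete])
    ultimately show ?thesis using len t unfolding clique_tensor_def c_def by auto
  qed
  have "tensor_apply t n (clique_tensor n E t) (\<lambda>_. 1) i = of_nat ((n - 1) choose (t - 1))"
    if i: "i < n" for i
  proof -
    have ones: "prod_list (map (\<lambda>_. 1 :: complex) is) = 1" for "is" by (induction "is") auto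
    have "D i \<subseteq> index_lists (t - 1) n" unfolding D_def index_lists_def by auto
    then have "tensor_apply t n (clique_tensor n E t) (\<lambda>_. 1) i = (\<Sum>is\<in>D i. c)"
      unfolding tensor_apply_eq_sum_index_lists ones mult_1_right
    proof (rule sum.mono_neutral_cong_right[OF finite_index_lists])
      show "\<forall>is\<in>index_lists (t - 1) n - D i. clique_tensor n E t (i # is) = 0"
        using entry[OF i] by auto
      show "clique_tensor n E t (i # is) = c" if "is \<in> D i" for "is"
        using entry[OF i] that \<open>D i \<subseteq> index_lists (t - 1) n\<close> by auto
    qed
    also have "\<dots> = of_nat (((n - 1) choose (t - 1)) * fact (t - 1)) * c"
      using card_distinct_lists[of "{..<n} - {i}" "t - 1"] i by (simp add: D_def)
    also have "\<dots> = of_nat ((n - 1) choose (t - 1))" unfolding c_def by simp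
    finally show ?thesis .
  qed
  then show ?thesis
    unfolding tensor_eigenvalue_def using t nt by (intro exI[of _ "\<lambda>_. 1"]) (auto intro: exI[of _ 0])
qed

lemma complete_graph_clique_radius_bound:
  assumes t: "t \<ge> 1" and nt: "n \<ge> t" and complete: "\<forall>u<n. \<forall>v<n. u \<noteq> v \<longrightarrow> E u v"
  shows "clique_radius_bound n E t = real ((n - 1) choose (t - 1))"
proof -
  have "clique_count n E t = n choose t"
    unfolding clique_count_def complete_graph_cliques[OF complete] by (simp add: n_subsets)
  then have "clique_radius_bound n E t
      = real t / real n * real (n choose t) powr (1 / real t + (real t - 1) / real t)"
    unfolding clique_radius_bound_def by (simp add: powr_add mult.assoc)
  also have "1 / real t + (real t - 1) / real t = 1" using t by (simp add: field_simps)
  also have "real t / real n * real (n choose t) powr 1 = real ((n - 1) choose (t - 1))"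
  proof -
    have "t * (n choose t) = n * ((n - 1) choose (t - 1))"
      using t by (simp add: times_binomial_minus1_eq)
    then have "real t * real (n choose t) = real n * real ((n - 1) choose (t - 1))"
      by (metis of_nat_mult)
    moreover have "n \<ge> 1" "real (n choose t) > 0" using t nt by simp_all
    ultimately show ?thesis by (simp add: field_simps)
  qed
  finally show ?thesis .
qed

lemma clique_tensor_eigenvalue_attains_bound:
  assumes t: "t \<ge> 2" and n: "n \<ge> 1"
    and extremal: "(\<forall>u<n. \<forall>v<n. u \<noteq> v \<longrightarrow> E u v) \<or> cliques n E t = {}"
  shows "\<exists>lam. tensor_eigenvalue t n (clique_tensor n E t) lam
           \<and> cmod lam = clique_radius_bound n E t"
proof (cases "cliques n E t = {}")
  case True
  then have "tensor_eigenvalue t n (clique_tensor n E t) 0"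
    unfolding tensor_eigenvalue_def tensor_apply_def clique_tensor_def
    using n by (intro exI[of _ "\<lambda>_. 1"]) (auto intro: exI[of _ 0])
  moreover have "clique_radius_bound n E t = 0"
    using True unfolding clique_radius_bound_def clique_count_def by simp
  ultimately show ?thesis by auto
next
  case False
  then obtain S where "S \<in> cliques n E t" by blast
  then have nt: "n \<ge> t" using card_mono[of "{..<n}" S] unfolding cliques_def by auto
  have complete: "\<forall>u<n. \<forall>v<n. u \<noteq> v \<longrightarrow> E u v" using extremal False by blast
  have "t \<ge> 1" using t by simp
  show ?thesis
    using complete_graph_clique_tensor_eigenvalue[OF \<open>t \<ge> 1\<close> nt complete]
      complete_graph_clique_radius_bound[OF \<open>t \<ge> 1\<close> nt complete]
    by (intro exI[of _ "of_nat ((n - 1) choose (t - 1))"]) simp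
qed

theorem lemma6:
  fixes n t :: nat and E :: "nat \<Rightarrow> nat \<Rightarrow> bool"
  assumes "t \<ge> 2" and "n \<ge> 1"
    and "\<forall>u v. E u v \<longrightarrow> E v u" and "\<forall>v. \<not> E v v"
  shows "clique_spectral_radius n E t
           \<le> real t / real n * real (n choose t) powr (1 / real t)
               * real (clique_count n E t) powr ((real t - 1) / real t)
         \<and> (((\<forall>u<n. \<forall>v<n. u \<noteq> v \<longrightarrow> E u v) \<or> cliques n E t = {}) \<longrightarrow>
           clique_spectral_radius n E t
           = real t / real n * real (n choose t) powr (1 / real t)
               * real (clique_count n E t) powr ((real t - 1) / real t))"
proof -
  let ?Sp = "{cmod lam | lam. tensor_eigenvalue t n (clique_tensor n E t) lam}"
  have radius: "clique_spectral_radius n E t = Sup ?Sp"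
    unfolding clique_spectral_radius_def tensor_spectral_radius_def ..
  have bounded: "\<forall>a\<in>?Sp. a \<le> clique_radius_bound n E t"
    using clique_tensor_eigenvalue_norm_le[OF assms(1)] by blast
  have "Sup ?Sp \<le> clique_radius_bound n E t"
    using clique_tensor_has_eigenvalue[OF assms(1,2)] bounded by (intro cSup_least) auto
  moreover have "Sup ?Sp = clique_radius_bound n E t"
    if extremal: "(\<forall>u<n. \<forall>v<n. u \<noteq> v \<longrightarrow> E u v) \<or> cliques n E t = {}"
  proof -
    obtain lam where "tensor_eigenvalue t n (clique_tensor n E t) lam"
      and attains: "cmod lam = clique_radius_bound n E t"
      using clique_tensor_eigenvalue_attains_bound[OF assms(1,2) extremal] by blast
    then have "clique_radius_bound n E t \<in> ?Sp" unfolding attains[symmetric] by blast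
    then show ?thesis using bounded by (intro cSup_eq_maximum) auto
  qed
  ultimately show ?thesis unfolding radius clique_radius_bound_def by blast
qed

end
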